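(* Let $\varphi=\forall x_1\exists y_1\cdots\forall x_k\exists y_k\,P$ be a positive Horn sentence over a finite relational signature $\sigma$ with $P$ a conjunction of equality-free atomic $\sigma$-formulas, and let $\alpha$ be a positive integer or $\omega$. For every finite substructure $\mathcal{A}$ of $\mathcal{T}_\varphi(C_\alpha)$ (with domain $A$) there is a constant-conservative homomorphism from $\mathcal{A}$ to $\mathcal{T}^{|A|}_\varphi(C_\alpha)$.
   Context: Let $f_1,\dots,f_k$ be new function symbols, $f_i$ of arity $i$, and $\mathrm{Sk}(\varphi)=\forall x_1\cdots\forall x_k\,P(x_1,f_1(x_1),\dots,x_k,f_k(x_1,\dots,x_k))$. $C_\alpha=\{c_1,\dots,c_\alpha\}$ (or $\{c_1,c_2,\dots\}$ if $\alpha=\omega$) are new constants, $T_\varphi(C_\alpha)$ is the set of closed terms built from $C_\alpha$ with the $f_i$, and the rank of a term is its maximal nesting depth of function symbols. $\mathcal{T}_\varphi(C_\alpha)$ is the $\sigma$-structure on $T_\varphi(C_\alpha)$ in which $R(t_1,\dots,t_p)$ holds iff it is obtained from an atom of the matrix of $\mathrm{Sk}(\varphi)$ by substituting terms of $T_\varphi(C_\alpha)$ for $x_1,\dots,x_k$. $\mathcal{T}^m_\varphi(C_\alpha)$ is the induced substructure of $\mathcal{T}_\varphi(C_\alpha)$ on terms of rank $\leq m$. A partial map $f$ on $T_\varphi(C_\alpha)$ is constant-conservative if for every $t$ in its domain, every constant occurring in $f(t)$ occurs in $t$. *)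

theory Defs
  imports Main "HOL-Library.Extended_Nat"
begin

text \<open>Closed terms: constants c_j (Cst j, j >= 1) and applications f_i(t_1,...,t_i) (App i ts).\<close>
datatype trm = Cst nat | App nat "trm list"

fun rank :: "trm \<Rightarrow> nat" where
  "rank (Cst j) = 0"
| "rank (App i ts) = Suc (Max (insert 0 (set (map rank ts))))"

fun consts_of :: "trm \<Rightarrow> nat set" where
  "consts_of (Cst j) = {j}"
| "consts_of (App i ts) = \<Union> (set (map consts_of ts))"

text \<open>T_phi(C_alpha): closed terms built from c_1..c_alpha (alpha = \<infinity> for omega)
  with f_1,...,f_k, f_i of arity i.\<close>
inductive_set terms :: "nat \<Rightarrow> enat \<Rightarrow> trm set" for k :: nat and \<alpha> :: enat where
  cst: "1 \<le> j \<Longrightarrow> enat j \<le> \<alpha> \<Longrightarrow> Cst j \<in> terms k \<alpha>"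
| app: "1 \<le> i \<Longrightarrow> i \<le> k \<Longrightarrow> length ts = i \<Longrightarrow> \<forall>t\<in>set ts. t \<in> terms k \<alpha>
        \<Longrightarrow> App i ts \<in> terms k \<alpha>"

datatype var = X nat | Y nat

text \<open>Substitution of terms t_1..t_k for x_1..x_k in the Skolemized matrix:
  x_i becomes t_i and y_i becomes f_i(t_1,...,t_i).\<close>
fun sk_subst :: "(nat \<Rightarrow> trm) \<Rightarrow> var \<Rightarrow> trm" where
  "sk_subst t (X i) = t i"
| "sk_subst t (Y i) = App i (map t [1..<Suc i])"

text \<open>The matrix P is a list of equality-free atoms (R, [v_1,..,v_p]) over a relational
  signature with arity function ar.\<close>
definition wf_matrix :: "('r \<Rightarrow> nat) \<Rightarrow> nat \<Rightarrow> ('r \<times> var list) list \<Rightarrow> bool" where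
  "wf_matrix ar k P \<longleftrightarrow> (\<forall>(R, vs) \<in> set P. length vs = ar R \<and>
      (\<forall>v \<in> set vs. case v of X i \<Rightarrow> 1 \<le> i \<and> i \<le> k | Y i \<Rightarrow> 1 \<le> i \<and> i \<le> k))"

definition T_rel :: "nat \<Rightarrow> enat \<Rightarrow> ('r \<times> var list) list \<Rightarrow> 'r \<Rightarrow> trm list \<Rightarrow> bool" where
  "T_rel k \<alpha> P R ss \<longleftrightarrow> (\<exists>vs t. (R, vs) \<in> set P \<and> (\<forall>i\<in>{1..k}. t i \<in> terms k \<alpha>)
        \<and> ss = map (sk_subst t) vs)"

text \<open>Terms of rank at most m: universe of T^m_phi(C_alpha).\<close>
definition terms_upto :: "nat \<Rightarrow> enat \<Rightarrow> nat \<Rightarrow> trm set" where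
  "terms_upto k \<alpha> m = {t \<in> terms k \<alpha>. rank t \<le> m}"

definition is_hom_to_rank :: "nat \<Rightarrow> enat \<Rightarrow> ('r \<times> var list) list \<Rightarrow> trm set \<Rightarrow> nat \<Rightarrow> (trm \<Rightarrow> trm) \<Rightarrow> bool" where
  "is_hom_to_rank k \<alpha> P A m h \<longleftrightarrow> h ` A \<subseteq> terms_upto k \<alpha> m \<and>
     (\<forall>R ss. set ss \<subseteq> A \<longrightarrow> T_rel k \<alpha> P R ss \<longrightarrow> T_rel k \<alpha> P R (map h ss))"

definition constant_conservative :: "trm set \<Rightarrow> (trm \<Rightarrow> trm) \<Rightarrow> bool" where
  "constant_conservative A h \<longleftrightarrow> (\<forall>t\<in>A. consts_of (h t) \<subseteq> consts_of t)"

end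

theory Submission
  imports Defs
begin

text \<open>Collapse every term outside A to one of its own constants, and rebuild the terms of A
  from the collapsed arguments. The rebuilt terms commute with the Skolem terms
  f_i(t_1,...,t_i) that lie in A, which is all a homomorphism on the substructure needs;
  a nesting chain of depth d in a collapsed term passes through d distinct elements of A of
  strictly decreasing rank, which bounds the rank by |A|.\<close>

lemma finite_consts_of: "finite (consts_of s)"
  by (induction s) auto

lemma terms_consts_of_nonempty: "s \<in> terms k \<alpha> \<Longrightarrow> consts_of s \<noteq> {}"
proof (induction rule: terms.induct)
  case (app i ts)
  then obtain t where "t \<in> set ts" by (cases ts) auto
  with app.IH show ?case by auto
qed simp

lemma terms_Cst_of_consts_of:
  "s \<in> terms k \<alpha> \<Longrightarrow> j \<in> consts_of s \<Longrightarrow> Cst j \<in> terms k \<alpha>"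
  by (induction rule: terms.induct) (auto intro: terms.cst)

fun collapse :: "trm set \<Rightarrow> trm \<Rightarrow> trm" where
  "collapse A (Cst j) = Cst j"
| "collapse A (App i ts) = (if App i ts \<in> A then App i (map (collapse A) ts)
      else Cst (Min (consts_of (App i ts))))"

lemma Min_consts_of_in: "s \<in> terms k \<alpha> \<Longrightarrow> Min (consts_of s) \<in> consts_of s"
  by (simp add: finite_consts_of terms_consts_of_nonempty)

lemma consts_of_collapse: "s \<in> terms k \<alpha> \<Longrightarrow> consts_of (collapse A s) \<subseteq> consts_of s"
proof (induction rule: terms.induct)
  case (app i ts)
  show ?case
  proof (cases "App i ts \<in> A")
    case True
    with app.IH show ?thesis by auto
  next
    case False
    have "App i ts \<in> terms k \<alpha>"
      by (rule terms.app) (use app in auto)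
    then have "Min (consts_of (App i ts)) \<in> consts_of (App i ts)"
      by (rule Min_consts_of_in)
    with False show ?thesis
      by (simp del: consts_of.simps(2))
  qed
qed simp

lemma collapse_in_terms: "s \<in> terms k \<alpha> \<Longrightarrow> collapse A s \<in> terms k \<alpha>"
proof (induction rule: terms.induct)
  case (cst j)
  then show ?case by (simp add: terms.cst)
next
  case (app i ts)
  show ?case
  proof (cases "App i ts \<in> A")
    case True
    have "App i (map (collapse A) ts) \<in> terms k \<alpha>"
      by (rule terms.app) (use app in auto)
    with True show ?thesis by simp
  next
    case False
    have s: "App i ts \<in> terms k \<alpha>"
      by (rule terms.app) (use app in auto)
    have "Cst (Min (consts_of (App i ts))) \<in> terms k \<alpha>"
      using s Min_consts_of_in[OF s] by (rule terms_Cst_of_consts_of)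
    with False show ?thesis
      by (simp del: consts_of.simps(2))
  qed
qed

lemma rank_collapse:
  assumes "finite A"
  shows "rank (collapse A s) \<le> card {u \<in> A. rank u \<le> rank s}"
  using assms
proof (induction s)
  case (App i ts)
  let ?below = "\<lambda>r. {u \<in> A. rank u \<le> r}"
  show ?case
  proof (cases "App i ts \<in> A")
    case True
    have "rank (collapse A t) < card (?below (rank (App i ts)))" if t: "t \<in> set ts" for t
    proof -
      have "rank t < rank (App i ts)"
        using t by (simp add: less_Suc_eq_le)
      then have "?below (rank t) \<subset> ?below (rank (App i ts))"
        using True by (auto intro!: psubsetI dest!: equalityD2)
      then have "card (?below (rank t)) < card (?below (rank (App i ts)))"
        using App.prems by (intro psubset_card_mono) auto
      with App.IH[OF t App.prems] show ?thesis
        by linarith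
    qed
    moreover have "card (?below (rank (App i ts))) > 0"
      using True App.prems by (auto simp: card_gt_0_iff)
    ultimately show ?thesis
      using True by (auto simp: Suc_le_eq)
  qed simp
qed simp

lemma T_rel_map:
  assumes "set ss \<subseteq> A" and "T_rel k \<alpha> P R ss"
    and h_terms: "\<And>s. s \<in> terms k \<alpha> \<Longrightarrow> h s \<in> terms k \<alpha>"
    and h_App: "\<And>i ts. App i ts \<in> A \<Longrightarrow> h (App i ts) = App i (map h ts)"
  shows "T_rel k \<alpha> P R (map h ss)"
proof -
  obtain vs t where vs: "(R, vs) \<in> set P" and t: "\<forall>i\<in>{1..k}. t i \<in> terms k \<alpha>"
    and ss: "ss = map (sk_subst t) vs"
    using assms(2) unfolding T_rel_def by blast
  have "h (sk_subst t v) = sk_subst (h \<circ> t) v" if "v \<in> set vs" for v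
  proof (cases v)
    case (Y j)
    then have "App j (map t [1..<Suc j]) \<in> A"
      using assms(1) ss that by auto
    with Y show ?thesis by (simp add: h_App)
  qed simp
  then have "map h ss = map (sk_subst (h \<circ> t)) vs"
    using ss by simp
  moreover have "\<forall>i\<in>{1..k}. (h \<circ> t) i \<in> terms k \<alpha>"
    using t h_terms by simp
  ultimately show ?thesis
    using vs unfolding T_rel_def by blast
qed

theorem mainTheorem13:
  fixes ar :: "'r::finite \<Rightarrow> nat"
    and k :: nat and \<alpha> :: enat
    and P :: "('r \<times> var list) list"
    and A :: "trm set"
  assumes "wf_matrix ar k P"
    and "1 \<le> \<alpha>"
    and "finite A"
    and "A \<subseteq> terms k \<alpha>"
  shows "\<exists>h. is_hom_to_rank k \<alpha> P A (card A) h \<and> constant_conservative A h"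
proof (intro exI conjI)
  show "constant_conservative A (collapse A)"
    unfolding constant_conservative_def using consts_of_collapse assms(4) by blast
  have "rank (collapse A s) \<le> card A" for s
    using rank_collapse[OF assms(3), of s] card_mono[OF assms(3), of "{u \<in> A. rank u \<le> rank s}"]
    by auto
  then have "collapse A ` A \<subseteq> terms_upto k \<alpha> (card A)"
    using assms(4) collapse_in_terms unfolding terms_upto_def by blast
  moreover have "T_rel k \<alpha> P R (map (collapse A) ss)"
    if "set ss \<subseteq> A" and "T_rel k \<alpha> P R ss" for R ss
    using that collapse_in_terms proof (rule T_rel_map)
    fix i ts assume "App i ts \<in> A"
    then show "collapse A (App i ts) = App i (map (collapse A) ts)" by simp
  qed
  ultimately show "is_hom_to_rank k \<alpha> P A (card A) (collapse A)"
    unfolding is_hom_to_rank_def by blast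
qed

end
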